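(* In the coefficient-choosing game of degree $d = 3$ over $R = \mathbb{Z}/16\mathbb{Z}$, Wanda has a winning strategy irrespective of whether she is the first or the second player.
   Context: The coefficient-choosing game of degree $d$ over $R$: Nora and Wanda alternately choose coefficients of $f(x) = a_d x^d + \cdots + a_0$; on each move the current player picks a not-yet-chosen coefficient and assigns it a value in $R$, subject to $a_d \neq 0$, $a_0 \neq 0$. After all $d+1$ coefficients are chosen, Wanda wins if $f$ has a root in $R$, and Nora wins otherwise. *)

theory Defs
  imports Main "HOL-Library.Numeral_Type"
begin

text \<open>A position is a partial assignment s :: nat \<Rightarrow> 'a option of the coefficients
  a_0, ..., a_d (index i \<mapsto> coefficient of x^i; None = not yet chosen).
  The boolean flag says whether it is Wanda's turn to move.\<close>

definition complete :: "nat \<Rightarrow> (nat \<Rightarrow> 'a option) \<Rightarrow> bool" where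
  "complete d s \<longleftrightarrow> (\<forall>i\<le>d. s i \<noteq> None)"

definition has_root :: "nat \<Rightarrow> (nat \<Rightarrow> 'a::comm_ring_1 option) \<Rightarrow> bool" where
  "has_root d s \<longleftrightarrow> (\<exists>x::'a. (\<Sum>i\<le>d. the (s i) * x ^ i) = 0)"

definition legal_move :: "nat \<Rightarrow> (nat \<Rightarrow> 'a::zero option) \<Rightarrow> nat \<Rightarrow> 'a \<Rightarrow> bool" where
  "legal_move d s i v \<longleftrightarrow> i \<le> d \<and> s i = None \<and> ((i = 0 \<or> i = d) \<longrightarrow> v \<noteq> 0)"

inductive wanda_wins :: "nat \<Rightarrow> bool \<Rightarrow> (nat \<Rightarrow> 'a::comm_ring_1 option) \<Rightarrow> bool"
  for d :: nat where
  terminal: "complete d s \<Longrightarrow> has_root d s \<Longrightarrow> wanda_wins d t s"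
| wanda_move: "\<not> complete d s \<Longrightarrow> legal_move d s i v \<Longrightarrow>
     wanda_wins d False (s(i := Some v)) \<Longrightarrow> wanda_wins d True s"
| nora_move: "\<not> complete d s \<Longrightarrow>
     (\<And>i v. legal_move d s i v \<Longrightarrow> wanda_wins d True (s(i := Some v))) \<Longrightarrow>
     wanda_wins d False s"

end

theory Submission
  imports Defs
begin

text \<open>Whenever Wanda chooses a middle coefficient last, she makes \<open>1\<close> a root.

  Moving second, she answers \<open>a\<^sub>0\<close> or \<open>a\<^sub>3\<close> by fixing the other one, which leaves
  her the last middle coefficient. She answers a middle coefficient by \<open>a\<^sub>0 = 1\<close>;
  if Nora then fixes \<open>a\<^sub>3\<close>, Wanda chooses the last middle coefficient, and otherwise
  she chooses \<open>a\<^sub>3 \<noteq> 0\<close> making \<open>1\<close>, \<open>-1\<close> or \<open>3\<close> a root. This is possible because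
  \<open>1 + b + c\<close>, \<open>1 - b + c\<close> and \<open>1 + 3b + 9c\<close> do not all vanish (if the first two do,
  the third is \<open>-8\<close>) and \<open>27\<close> is a unit of \<open>\<int>/16\<close>.

  Moving first, she plays \<open>a\<^sub>0 = 4\<close>. Since \<open>16 = 0\<close>, every \<open>4 + x + c x\<^sup>2 + w x\<^sup>3\<close> has
  the root \<open>-4\<close>, so she answers \<open>a\<^sub>2\<close> or \<open>a\<^sub>3\<close> by \<open>a\<^sub>1 = 1\<close>. If Nora chooses \<open>a\<^sub>1 = v\<close>,
  Wanda's choice of \<open>a\<^sub>2\<close> depends on \<open>v mod 4\<close>: for odd \<open>v\<close> the root is \<open>-4v\<close>
  whatever \<open>a\<^sub>2\<close> and \<open>a\<^sub>3 = w\<close> are, for \<open>v \<equiv> 2\<close> she plays \<open>a\<^sub>2 = 0\<close> and the root is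
  \<open>-(v + 4w)\<close>, and for \<open>v \<equiv> 0\<close> she plays \<open>a\<^sub>2 \<equiv> -1 - v/2 (mod 4)\<close>, after which a root
  (\<open>2\<close> for even \<open>w\<close>, a Hensel lift of \<open>1\<close> for odd \<open>w\<close>) is found by inspection.\<close>

lemma legal_move_not_complete: "legal_move d s i v \<Longrightarrow> \<not> complete d s"
  by (auto simp: legal_move_def complete_def)

lemma wanda_wins_moveI:
  "legal_move d s i v \<Longrightarrow> wanda_wins d False (s(i := Some v)) \<Longrightarrow> wanda_wins d True s"
  by (blast intro: wanda_wins.wanda_move dest: legal_move_not_complete)

definition cubic_position :: "'a option \<Rightarrow> 'a option \<Rightarrow> 'a option \<Rightarrow> 'a option \<Rightarrow> nat \<Rightarrow> 'a option"
  where "cubic_position a0 a1 a2 a3 i =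
    (if i = 0 then a0 else if i = 1 then a1 else if i = 2 then a2 else if i = 3 then a3 else None)"

lemma cubic_position_empty: "cubic_position None None None None = (\<lambda>_. None)"
  by (simp add: cubic_position_def fun_eq_iff)

lemma cubic_position_update [simp]:
  "(cubic_position a0 a1 a2 a3)(0 := Some v) = cubic_position (Some v) a1 a2 a3"
  "(cubic_position a0 a1 a2 a3)(Suc 0 := Some v) = cubic_position a0 (Some v) a2 a3"
  "(cubic_position a0 a1 a2 a3)(2 := Some v) = cubic_position a0 a1 (Some v) a3"
  "(cubic_position a0 a1 a2 a3)(3 := Some v) = cubic_position a0 a1 a2 (Some v)"
  by (auto simp: cubic_position_def fun_eq_iff)

lemma complete_cubic_position [simp]:
  "complete 3 (cubic_position a0 a1 a2 a3) \<longleftrightarrow>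
     a0 \<noteq> None \<and> a1 \<noteq> None \<and> a2 \<noteq> None \<and> a3 \<noteq> None"
  by (auto simp: complete_def cubic_position_def numeral_3_eq_3 le_Suc_eq)

lemma has_root_cubic_position [simp]:
  "has_root 3 (cubic_position (Some a0) (Some a1) (Some a2) (Some a3)) \<longleftrightarrow>
     (\<exists>x. a0 + a1 * x + a2 * x^2 + a3 * x^3 = 0)"
  by (simp add: has_root_def cubic_position_def numeral_3_eq_3 add.assoc power2_eq_square)

lemma legal_move_cubic_position [simp]:
  "legal_move 3 (cubic_position a0 a1 a2 a3) i v \<longleftrightarrow>
     i = 0 \<and> a0 = None \<and> v \<noteq> 0 \<or> i = 1 \<and> a1 = None \<or> i = 2 \<and> a2 = None \<or>
     i = 3 \<and> a3 = None \<and> v \<noteq> 0"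
  by (auto simp: legal_move_def cubic_position_def)

lemma wanda_wins_cubic_rootI:
  "a0 + a1 * x + a2 * x^2 + a3 * x^3 = 0 \<Longrightarrow>
     wanda_wins 3 t (cubic_position (Some a0) (Some a1) (Some a2) (Some a3))"
  by (rule wanda_wins.terminal) auto

lemma wanda_completes_linear_coeff:
  "wanda_wins 3 True (cubic_position (Some a0) None (Some a2) (Some a3))"
  by (rule wanda_wins_moveI[where i = 1 and v = "- (a0 + a2 + a3)"])
    (auto intro: wanda_wins_cubic_rootI[where x = 1])

lemma wanda_completes_quadratic_coeff:
  "wanda_wins 3 True (cubic_position (Some a0) (Some a1) None (Some a3))"
  by (rule wanda_wins_moveI[where i = 2 and v = "- (a0 + a1 + a3)"])
    (auto intro: wanda_wins_cubic_rootI[where x = 1])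

lemma wanda_completes_leading_coeff:
  "a3 \<noteq> 0 \<Longrightarrow> a0 + a1 * x + a2 * x^2 + a3 * x^3 = 0 \<Longrightarrow>
     wanda_wins 3 True (cubic_position (Some a0) (Some a1) (Some a2) None)"
  by (rule wanda_wins_moveI[where i = 3 and v = a3]) (auto intro: wanda_wins_cubic_rootI)

lemma nora_completes_leading_coeff:
  assumes "\<And>w. w \<noteq> 0 \<Longrightarrow> \<exists>x. a0 + a1 * x + a2 * x^2 + w * x^3 = 0"
  shows "wanda_wins 3 False (cubic_position (Some a0) (Some a1) (Some a2) None)"
proof (rule wanda_wins.nora_move)
  fix i v
  assume "legal_move 3 (cubic_position (Some a0) (Some a1) (Some a2) None) i v"
  with assms
  show "wanda_wins 3 True ((cubic_position (Some a0) (Some a1) (Some a2) None)(i := Some v))"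
    by (auto intro: wanda_wins_cubic_rootI)
qed simp

lemma nora_completes_quadratic_coeff:
  assumes "\<And>w. \<exists>x. a0 + a1 * x + w * x^2 + a3 * x^3 = 0"
  shows "wanda_wins 3 False (cubic_position (Some a0) (Some a1) None (Some a3))"
proof (rule wanda_wins.nora_move)
  fix i v
  assume "legal_move 3 (cubic_position (Some a0) (Some a1) None (Some a3)) i v"
  with assms
  show "wanda_wins 3 True ((cubic_position (Some a0) (Some a1) None (Some a3))(i := Some v))"
    by (auto intro: wanda_wins_cubic_rootI)
qed simp

lemma wanda_wins_middle_coeffs_open:
  "wanda_wins 3 False (cubic_position (Some a0) None None (Some a3))"
proof (rule wanda_wins.nora_move)
  fix i v
  assume "legal_move 3 (cubic_position (Some a0) None None (Some a3)) i v"
  then show "wanda_wins 3 True ((cubic_position (Some a0) None None (Some a3))(i := Some v))"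
    by (auto simp: wanda_completes_linear_coeff wanda_completes_quadratic_coeff)
qed simp

lemma ex_nonzero_leading_coeff_root:
  fixes b c :: 16
  obtains e x where "e \<noteq> 0" "1 + b * x + c * x^2 + e * x^3 = 0"
proof -
  consider "1 + b + c \<noteq> 0" | "1 - b + c \<noteq> 0" | "1 + b + c = 0" "1 - b + c = 0"
    by blast
  then show ?thesis
  proof cases
    case 1
    show ?thesis
    proof (rule that)
      show "- (1 + b + c) \<noteq> 0"
        using 1 by (metis neg_equal_0_iff_equal)
      show "1 + b * 1 + c * 1^2 + - (1 + b + c) * 1^3 = 0"
        by simp
    qed
  next
    case 2
    show ?thesis
    proof (rule that)
      show "1 - b + c \<noteq> 0"
        using 2 .
      show "1 + b * (- 1) + c * (- 1)^2 + (1 - b + c) * (- 1)^3 = 0"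
        by simp
    qed
  next
    case 3
    have "1 + b * 3 + c * 3^2 + 8 * 3^3 =
        9 * (1 + b + c) - 3 * ((1 + b + c) - (1 - b + c)) + (208 :: 16)"
      by (simp add: algebra_simps)
    also have "\<dots> = 0"
      using 3 by simp
    finally show ?thesis
      by (rule that[rotated]) simp
  qed
qed

lemma sixteen_eq_zero: "(16 :: 16) = 0"
  by simp

lemma UNIV_16: "(UNIV :: 16 set) = {0, 1, 2, 3, 4, 5, 6, 7, 8, 9, 10, 11, 12, 13, 14, 15}"
  by (rule card_subset_eq[symmetric]) auto

lemma residue_cases_mod_4:
  fixes v :: 16
  obtains u where "v = 2 * u + 1" "v \<notin> {0, 4, 8, 12}"
    | m where "v = 4 * m + 2" "v \<notin> {0, 4, 8, 12}"
    | "v \<in> {0, 4, 8, 12}"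
proof -
  have "(\<exists>u. v = 2 * u + 1 \<and> v \<notin> {0, 4, 8, 12}) \<or>
      (\<exists>m. v = 4 * m + 2 \<and> v \<notin> {0, 4, 8, 12}) \<or> v \<in> {0, 4, 8, 12}"
    using UNIV_I[of v] unfolding bex_UNIV[symmetric] UNIV_16 by auto
  with that show ?thesis
    by blast
qed

lemma ex_root_four_plus_x: "\<exists>x. 4 + x + c * x^2 + w * x^3 = (0 :: 16)"
proof
  have "4 + (- 4) + c * (- 4)^2 + w * (- 4)^3 = 16 * (c - 4 * w)"
    by (simp add: algebra_simps)
  then show "4 + (- 4) + c * (- 4)^2 + w * (- 4)^3 = (0 :: 16)"
    by (simp only: sixteen_eq_zero mult_zero_left)
qed

lemma ex_root_odd_linear_coeff:
  fixes c u w :: 16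
  defines "v \<equiv> 2 * u + 1"
  shows "\<exists>x. 4 + v * x + c * x^2 + w * x^3 = 0"
proof
  have "4 + v * (- 4 * v) + c * (- 4 * v)^2 + w * (- 4 * v)^3 =
      16 * (c * v^2 - 4 * w * v^3 - u * (u + 1))"
    unfolding v_def by (simp add: algebra_simps power2_eq_square power3_eq_cube)
  then show "4 + v * (- 4 * v) + c * (- 4 * v)^2 + w * (- 4 * v)^3 = 0"
    by (simp only: sixteen_eq_zero mult_zero_left)
qed

lemma ex_root_linear_coeff_2_mod_4:
  fixes m w :: 16
  defines "v \<equiv> 4 * m + 2"
  shows "\<exists>x. 4 + v * x + w * x^3 = 0"
proof
  let ?x = "- (v + 4 * w)"
  have "4 + v * ?x + w * ?x^3 =
      - 16 * ((m + w) * (m + w + 1) * (1 + 2 * w * (2 * m + 1 + 2 * w)))"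
    unfolding v_def by (simp add: algebra_simps power2_eq_square power3_eq_cube)
  then show "4 + v * ?x + w * ?x^3 = 0"
    by (simp only: sixteen_eq_zero minus_zero mult_zero_left)
qed

definition quadratic_reply :: "16 \<Rightarrow> 16"
  where "quadratic_reply v = (if v \<in> {0, 8} then 3 else if v \<in> {4, 12} then 1 else 0)"

lemma ex_root_linear_coeff_0_mod_4:
  fixes v w :: 16
  assumes "v \<in> {0, 4, 8, 12}" and "w \<noteq> 0"
  shows "\<exists>x. 4 + v * x + quadratic_reply v * x^2 + w * x^3 = 0"
  using assms UNIV_I[of w] unfolding bex_UNIV[symmetric] UNIV_16 quadratic_reply_def by auto

lemma ex_root_quadratic_reply:
  fixes v w :: 16
  assumes "w \<noteq> 0"
  shows "\<exists>x. 4 + v * x + quadratic_reply v * x^2 + w * x^3 = 0"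
proof (cases v rule: residue_cases_mod_4)
  case 1
  then show ?thesis
    using ex_root_odd_linear_coeff by blast
next
  case 2
  then have "quadratic_reply v = 0"
    by (simp add: quadratic_reply_def)
  with 2 show ?thesis
    using ex_root_linear_coeff_2_mod_4 by auto
next
  case 3
  then show ?thesis
    using assms by (rule ex_root_linear_coeff_0_mod_4)
qed

lemma wanda_wins_after_linear_coeff:
  fixes b :: 16
  shows "wanda_wins 3 False (cubic_position (Some 1) (Some b) None None)"
proof (rule wanda_wins.nora_move)
  fix i v
  assume "legal_move 3 (cubic_position (Some 1) (Some b) None None) i v"
  then consider "i = 2" | "i = 3"
    by auto
  then show "wanda_wins 3 True ((cubic_position (Some 1) (Some b) None None)(i := Some v))"
  proof cases
    case 1
    obtain e x where "e \<noteq> 0" "1 + b * x + v * x^2 + e * x^3 = 0"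
      by (rule ex_nonzero_leading_coeff_root)
    with 1 show ?thesis
      by (simp add: wanda_completes_leading_coeff)
  next
    case 2
    then show ?thesis
      by (simp add: wanda_completes_quadratic_coeff)
  qed
qed simp

lemma wanda_wins_after_quadratic_coeff:
  fixes c :: 16
  shows "wanda_wins 3 False (cubic_position (Some 1) None (Some c) None)"
proof (rule wanda_wins.nora_move)
  fix i v
  assume "legal_move 3 (cubic_position (Some 1) None (Some c) None) i v"
  then consider "i = 1" | "i = 3"
    by auto
  then show "wanda_wins 3 True ((cubic_position (Some 1) None (Some c) None)(i := Some v))"
  proof cases
    case 1
    obtain e x where "e \<noteq> 0" "1 + v * x + c * x^2 + e * x^3 = 0"
      by (rule ex_nonzero_leading_coeff_root)
    with 1 show ?thesis
      by (simp add: wanda_completes_leading_coeff)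
  next
    case 2
    then show ?thesis
      by (simp add: wanda_completes_linear_coeff)
  qed
qed simp

lemma wanda_wins_second: "wanda_wins 3 False (cubic_position None None None None :: nat \<Rightarrow> 16 option)"
proof (rule wanda_wins.nora_move)
  fix i v
  assume "legal_move 3 (cubic_position None None None None :: nat \<Rightarrow> 16 option) i v"
  then consider "i = 0" | "i = 1" | "i = 2" | "i = 3"
    by auto
  then show "wanda_wins 3 True ((cubic_position None None None None)(i := Some v))"
  proof cases
    case 1
    have "wanda_wins 3 True (cubic_position (Some v) None None None)"
      by (rule wanda_wins_moveI[where i = 3 and v = 1]) (simp_all add: wanda_wins_middle_coeffs_open)
    with 1 show ?thesis
      by simp
  next
    case 2
    have "wanda_wins 3 True (cubic_position None (Some v) None None)"
      by (rule wanda_wins_moveI[where i = 0 and v = 1]) (simp_all add: wanda_wins_after_linear_coeff)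
    with 2 show ?thesis
      by simp
  next
    case 3
    have "wanda_wins 3 True (cubic_position None None (Some v) None)"
      by (rule wanda_wins_moveI[where i = 0 and v = 1]) (simp_all add: wanda_wins_after_quadratic_coeff)
    with 3 show ?thesis
      by simp
  next
    case 4
    have "wanda_wins 3 True (cubic_position None None None (Some v))"
      by (rule wanda_wins_moveI[where i = 0 and v = 1]) (simp_all add: wanda_wins_middle_coeffs_open)
    with 4 show ?thesis
      by simp
  qed
qed simp

lemma wanda_wins_after_constant_four:
  "wanda_wins 3 False (cubic_position (Some 4) None None None :: nat \<Rightarrow> 16 option)"
proof (rule wanda_wins.nora_move)
  fix i v
  assume "legal_move 3 (cubic_position (Some 4) None None None :: nat \<Rightarrow> 16 option) i v"
  then consider "i = 1" | "i = 2" | "i = 3"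
    by auto
  then show "wanda_wins 3 True ((cubic_position (Some 4) None None None)(i := Some v))"
  proof cases
    case 1
    have "wanda_wins 3 False (cubic_position (Some 4) (Some v) (Some (quadratic_reply v)) None)"
      by (rule nora_completes_leading_coeff) (rule ex_root_quadratic_reply)
    with 1 show ?thesis
      by (auto intro: wanda_wins_moveI[where i = 2 and v = "quadratic_reply v"])
  next
    case 2
    have "wanda_wins 3 False (cubic_position (Some 4) (Some 1) (Some v) None)"
      by (rule nora_completes_leading_coeff) (simp add: ex_root_four_plus_x)
    with 2 show ?thesis
      by (auto intro: wanda_wins_moveI[where i = 1 and v = 1])
  next
    case 3
    have "wanda_wins 3 False (cubic_position (Some 4) (Some 1) None (Some v))"
      by (rule nora_completes_quadratic_coeff) (simp add: ex_root_four_plus_x)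
    with 3 show ?thesis
      by (auto intro: wanda_wins_moveI[where i = 1 and v = 1])
  qed
qed simp

lemma wanda_wins_first: "wanda_wins 3 True (cubic_position None None None None :: nat \<Rightarrow> 16 option)"
  by (rule wanda_wins_moveI[where i = 0 and v = 4]) (simp_all add: wanda_wins_after_constant_four)

theorem lemma9:
  shows "wanda_wins 3 True (\<lambda>_. None :: 16 option) \<and> wanda_wins 3 False (\<lambda>_. None :: 16 option)"
  using wanda_wins_first wanda_wins_second by (simp add: cubic_position_empty)

end
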